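(* Let $G$ be a group and $P,Q\in G$, and put $A=PQ$. Call a finite sequence $P_0,P_1,\dots,P_m$ ($m\ge 1$) of elements of $G$ a chain if $P_i\neq P_{i+1}$ and $P_i\neq P_{i+2}$ whenever these indices are in range, and $\{P_iP_{i+1},P_{i+1}P_i\}=\{P_0P_1,P_1P_0\}$ for all $0\le i<m$. Then: (a) if $m\ge 3$ and $P_0,\dots,P_m$ is a chain with $P_0=P$, $P_1=Q$, then (1) $PQ\neq QP$, (2) $PQ^2=Q^2P$, (3) $P^2Q=QP^2$, and for all $0\le i\le m$, $P_i=A^{-i/2}PA^{i/2}$ and $P_i^2=P^2$ if $i$ is even, while $P_i=A^{-(i-1)/2}QA^{(i-1)/2}$ and $P_i^2=Q^2$ if $i$ is odd; (b) conversely, if $P,Q$ satisfy (1), (2), (3), then for every $m\ge 3$ the sequence defined by $P_i=A^{-i/2}PA^{i/2}$ ($i$ even), $P_i=A^{-(i-1)/2}QA^{(i-1)/2}$ ($i$ odd), $0\le i\le m$, is a chain with $P_0=P$, $P_1=Q$, and its terms satisfy $P_i^2=P^2$ for $i$ even and $P_i^2=Q^2$ for $i$ odd.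
   Context: In the group cograph of $G$, the points are the elements of $G$ and the edge joining distinct $P,Q$ is $\{PQ,QP\}$; a chain is thus a sequence of points in which consecutive pairs are all joined by the same edge. *)

theory Defs
  imports "HOL-Algebra.Group"
begin

text \<open>A chain of length m (points P 0, ..., P m) in the group cograph of G.
  Only the values of Ps at indices 0..m matter.\<close>
definition is_chain :: "('a, 'b) monoid_scheme \<Rightarrow> (nat \<Rightarrow> 'a) \<Rightarrow> nat \<Rightarrow> bool" where
  "is_chain G Ps m \<longleftrightarrow>
     1 \<le> m \<and>
     (\<forall>i\<le>m. Ps i \<in> carrier G) \<and>
     (\<forall>i. i + 1 \<le> m \<longrightarrow> Ps i \<noteq> Ps (i + 1)) \<and>
     (\<forall>i. i + 2 \<le> m \<longrightarrow> Ps i \<noteq> Ps (i + 2)) \<and>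
     (\<forall>i<m. {Ps i \<otimes>\<^bsub>G\<^esub> Ps (i + 1), Ps (i + 1) \<otimes>\<^bsub>G\<^esub> Ps i}
             = {Ps 0 \<otimes>\<^bsub>G\<^esub> Ps 1, Ps 1 \<otimes>\<^bsub>G\<^esub> Ps 0})"

text \<open>The explicit sequence: P_i = A^(-i/2) P A^(i/2) for i even,
  P_i = A^(-(i-1)/2) Q A^((i-1)/2) for i odd, where A = P Q.
  For both parities the exponent is i div 2.\<close>
definition conj_seq :: "('a, 'b) monoid_scheme \<Rightarrow> 'a \<Rightarrow> 'a \<Rightarrow> nat \<Rightarrow> 'a" where
  "conj_seq G P Q i =
     (let A = P \<otimes>\<^bsub>G\<^esub> Q; k = i div 2 in
      inv\<^bsub>G\<^esub> (A [^]\<^bsub>G\<^esub> k) \<otimes>\<^bsub>G\<^esub> (if even i then P else Q) \<otimes>\<^bsub>G\<^esub> (A [^]\<^bsub>G\<^esub> k))"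

end

theory Submission
  imports Defs
begin

text \<open>Write A = P Q and B = Q P. In a chain every edge is {A, B}, and A \<noteq> B because otherwise
  P_2 = P_0. Since consecutive edges cannot repeat the same product in the same order without
  forcing P_(i+2) = P_i, the chain alternates: P_i P_(i+1) = A and P_(i+1) P_i = B, so
  P_(i+1) = P_i^-1 A, which unwinds to the stated conjugates of P and Q. Reading off
  P_2 P_1 = B and P_3 P_2 = B gives P Q^2 = Q^2 P and then P^2 Q = Q P^2.
  Conversely these two relations make B, P^2 and Q^2 commute with A, and so with every power
  of A; conjugating by such a power therefore fixes B and the squares, which is all that is
  needed to see that the explicit sequence is a chain.\<close>

context group
begin

lemma nat_pow_2: "x [^] (2::nat) = x \<otimes> x" if "x \<in> carrier G"
  using that by (simp add: numeral_2_eq_2)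

lemma inv_mult_cancel_left [simp]:
  "x \<in> carrier G \<Longrightarrow> y \<in> carrier G \<Longrightarrow> inv x \<otimes> (x \<otimes> y) = y"
  by (simp add: m_assoc[symmetric])

lemma mult_inv_cancel_left [simp]:
  "x \<in> carrier G \<Longrightarrow> y \<in> carrier G \<Longrightarrow> x \<otimes> (inv x \<otimes> y) = y"
  by (simp add: m_assoc[symmetric])

lemma inv_conj_mult:
  assumes "c \<in> carrier G" "x \<in> carrier G" "y \<in> carrier G"
  shows "(inv c \<otimes> x \<otimes> c) \<otimes> (inv c \<otimes> y \<otimes> c) = inv c \<otimes> (x \<otimes> y) \<otimes> c"
  using assms by (simp add: m_assoc)

lemma inv_conj_inv:
  assumes "c \<in> carrier G" "x \<in> carrier G"
  shows "inv (inv c \<otimes> x \<otimes> c) = inv c \<otimes> inv x \<otimes> c"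
  using assms by (simp add: inv_mult_group m_assoc)

lemma inv_conj_pow_commuting:
  assumes "a \<in> carrier G" "x \<in> carrier G" "x \<otimes> a = a \<otimes> x"
  shows "inv (a [^] (k::nat)) \<otimes> x \<otimes> a [^] k = x"
proof -
  have "x \<otimes> a [^] k = a [^] k \<otimes> x"
    using assms group_commutes_pow[of a x k] by simp
  then show ?thesis
    using assms by (simp add: m_assoc)
qed

lemma conj_seq_closed:
  "P \<in> carrier G \<Longrightarrow> Q \<in> carrier G \<Longrightarrow> conj_seq G P Q i \<in> carrier G"
  by (simp add: conj_seq_def Let_def)

lemma conj_seq_0: "P \<in> carrier G \<Longrightarrow> conj_seq G P Q 0 = P"
  by (simp add: conj_seq_def)

lemma conj_seq_1: "Q \<in> carrier G \<Longrightarrow> conj_seq G P Q 1 = Q"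
  by (simp add: conj_seq_def)

lemma conj_seq_even:
  "even i \<Longrightarrow> conj_seq G P Q i = inv ((P \<otimes> Q) [^] (i div 2)) \<otimes> P \<otimes> (P \<otimes> Q) [^] (i div 2)"
  by (simp add: conj_seq_def Let_def)

lemma conj_seq_odd:
  "odd i \<Longrightarrow>
    conj_seq G P Q i = inv ((P \<otimes> Q) [^] ((i - 1) div 2)) \<otimes> Q \<otimes> (P \<otimes> Q) [^] ((i - 1) div 2)"
  by (auto simp: conj_seq_def Let_def elim!: oddE)

lemma conj_seq_Suc:
  assumes P: "P \<in> carrier G" and Q: "Q \<in> carrier G"
  shows "conj_seq G P Q (Suc i) = inv (conj_seq G P Q i) \<otimes> (P \<otimes> Q)"
proof -
  define c where "c = (P \<otimes> Q) [^] (i div 2)"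
  have c: "c \<in> carrier G"
    using P Q by (simp add: c_def)
  have cA: "c \<otimes> (P \<otimes> Q) = (P \<otimes> Q) \<otimes> c"
    unfolding c_def using P Q by (metis m_closed nat_pow_Suc nat_pow_Suc2)
  show ?thesis
  proof (cases "even i")
    case True
    then have "conj_seq G P Q (Suc i) = inv c \<otimes> Q \<otimes> c" "conj_seq G P Q i = inv c \<otimes> P \<otimes> c"
      by (simp_all add: conj_seq_def Let_def c_def)
    moreover have "inv (inv c \<otimes> P \<otimes> c) \<otimes> (P \<otimes> Q) = inv c \<otimes> Q \<otimes> c"
      using P Q c cA by (simp add: inv_mult_group m_assoc[symmetric]) (simp add: m_assoc)
    ultimately show ?thesis
      by simp
  next
    case False
    then have "Suc i div 2 = Suc (i div 2)"
      by (auto elim!: oddE)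
    with False have "conj_seq G P Q (Suc i) = inv (c \<otimes> (P \<otimes> Q)) \<otimes> P \<otimes> (c \<otimes> (P \<otimes> Q))"
      "conj_seq G P Q i = inv c \<otimes> Q \<otimes> c"
      using P Q by (simp_all add: conj_seq_def Let_def c_def nat_pow_Suc2)
    moreover have "inv (inv c \<otimes> Q \<otimes> c) \<otimes> (P \<otimes> Q) = inv (c \<otimes> (P \<otimes> Q)) \<otimes> P \<otimes> (c \<otimes> (P \<otimes> Q))"
      using P Q c cA by (simp add: inv_mult_group m_assoc[symmetric]) (simp add: m_assoc)
    ultimately show ?thesis
      by simp
  qed
qed

lemma conj_seq_mult_Suc:
  "P \<in> carrier G \<Longrightarrow> Q \<in> carrier G \<Longrightarrow> conj_seq G P Q i \<otimes> conj_seq G P Q (Suc i) = P \<otimes> Q"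
  by (simp add: conj_seq_Suc conj_seq_closed)

lemma square_left_commute_imp_commute_mult:
  assumes P: "P \<in> carrier G" and Q: "Q \<in> carrier G"
    and PQQ: "P \<otimes> Q [^] (2::nat) = Q [^] (2::nat) \<otimes> P"
  shows "Q [^] (2::nat) \<otimes> (P \<otimes> Q) = (P \<otimes> Q) \<otimes> Q [^] (2::nat)"
  using assms by (simp add: nat_pow_2 m_assoc[symmetric])

lemma square_right_commute_imp_commute_mult:
  assumes P: "P \<in> carrier G" and Q: "Q \<in> carrier G"
    and PPQ: "P [^] (2::nat) \<otimes> Q = Q \<otimes> P [^] (2::nat)"
  shows "P [^] (2::nat) \<otimes> (P \<otimes> Q) = (P \<otimes> Q) \<otimes> P [^] (2::nat)"
  using assms by (simp add: nat_pow_2 m_assoc)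

lemma swap_commute_mult:
  assumes P: "P \<in> carrier G" and Q: "Q \<in> carrier G"
    and PQQ: "P \<otimes> Q [^] (2::nat) = Q [^] (2::nat) \<otimes> P"
    and PPQ: "P [^] (2::nat) \<otimes> Q = Q \<otimes> P [^] (2::nat)"
  shows "(Q \<otimes> P) \<otimes> (P \<otimes> Q) = (P \<otimes> Q) \<otimes> (Q \<otimes> P)"
proof -
  have "(Q \<otimes> P) \<otimes> (P \<otimes> Q) = Q \<otimes> (P [^] (2::nat) \<otimes> Q)"
    using P Q by (simp add: nat_pow_2 m_assoc)
  also have "\<dots> = Q [^] (2::nat) \<otimes> P \<otimes> P"
    using P Q PPQ by (simp add: nat_pow_2 m_assoc)
  also have "\<dots> = (P \<otimes> Q) \<otimes> (Q \<otimes> P)"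
    using P Q PQQ by (simp add: nat_pow_2 m_assoc[symmetric])
  finally show ?thesis .
qed

lemma conj_seq_square_even:
  assumes P: "P \<in> carrier G" and Q: "Q \<in> carrier G"
    and PPQ: "P [^] (2::nat) \<otimes> Q = Q \<otimes> P [^] (2::nat)" and "even i"
  shows "conj_seq G P Q i [^] (2::nat) = P [^] (2::nat)"
  using assms conj_seq_closed[OF P Q]
  by (simp add: conj_seq_even nat_pow_2 inv_conj_mult)
    (metis inv_conj_pow_commuting m_closed nat_pow_2 square_right_commute_imp_commute_mult)

lemma conj_seq_square_odd:
  assumes P: "P \<in> carrier G" and Q: "Q \<in> carrier G"
    and PQQ: "P \<otimes> Q [^] (2::nat) = Q [^] (2::nat) \<otimes> P" and "odd i"
  shows "conj_seq G P Q i [^] (2::nat) = Q [^] (2::nat)"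
  using assms conj_seq_closed[OF P Q]
  by (simp add: conj_seq_def Let_def nat_pow_2 inv_conj_mult)
    (metis inv_conj_pow_commuting m_closed nat_pow_2 square_left_commute_imp_commute_mult)

lemma conj_seq_Suc_mult:
  assumes P: "P \<in> carrier G" and Q: "Q \<in> carrier G"
    and PQQ: "P \<otimes> Q [^] (2::nat) = Q [^] (2::nat) \<otimes> P"
    and PPQ: "P [^] (2::nat) \<otimes> Q = Q \<otimes> P [^] (2::nat)"
  shows "conj_seq G P Q (Suc i) \<otimes> conj_seq G P Q i = Q \<otimes> P"
proof -
  define A where "A = P \<otimes> Q"
  define c where "c = A [^] (i div 2)"
  define X where "X = (if even i then P else Q)"
  have carrier: "A \<in> carrier G" "c \<in> carrier G" "X \<in> carrier G"
    using P Q by (simp_all add: A_def c_def X_def)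
  have conj_seq_i: "conj_seq G P Q i = inv c \<otimes> X \<otimes> c"
    by (simp add: conj_seq_def Let_def A_def c_def X_def)
  have "conj_seq G P Q (Suc i) \<otimes> conj_seq G P Q i
      = inv (inv c \<otimes> X \<otimes> c) \<otimes> (inv c \<otimes> A \<otimes> c) \<otimes> (inv c \<otimes> X \<otimes> c)"
    using carrier inv_conj_pow_commuting[of A A "i div 2"]
    by (simp add: conj_seq_Suc P Q conj_seq_i A_def c_def)
  also have "\<dots> = inv c \<otimes> (inv X \<otimes> A \<otimes> X) \<otimes> c"
    using carrier by (simp add: inv_conj_inv inv_conj_mult)
  also have "inv X \<otimes> A \<otimes> X = Q \<otimes> P"
    using P Q PQQ by (auto simp: X_def A_def nat_pow_2 m_assoc)
  also have "inv c \<otimes> (Q \<otimes> P) \<otimes> c = Q \<otimes> P"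
    unfolding c_def using P Q carrier swap_commute_mult[OF P Q PQQ PPQ]
    by (simp add: A_def inv_conj_pow_commuting)
  finally show ?thesis .
qed

lemma is_chain_conj_seq:
  assumes P: "P \<in> carrier G" and Q: "Q \<in> carrier G"
    and PQ: "P \<otimes> Q \<noteq> Q \<otimes> P"
    and PQQ: "P \<otimes> Q [^] (2::nat) = Q [^] (2::nat) \<otimes> P"
    and PPQ: "P [^] (2::nat) \<otimes> Q = Q \<otimes> P [^] (2::nat)"
    and "1 \<le> m"
  shows "is_chain G (conj_seq G P Q) m"
proof -
  let ?x = "conj_seq G P Q"
  have fwd: "?x i \<otimes> ?x (Suc i) = P \<otimes> Q" for i
    using conj_seq_mult_Suc[OF P Q] .
  have bwd: "?x (Suc i) \<otimes> ?x i = Q \<otimes> P" for i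
    using conj_seq_Suc_mult[OF P Q PQQ PPQ] .
  have "?x i \<noteq> ?x (Suc i)" for i
    using PQ fwd[of i] bwd[of i] by auto
  moreover have "?x i \<noteq> ?x (Suc (Suc i))" for i
    using PQ fwd[of "Suc i"] bwd[of i] by auto
  moreover have "?x 0 = P" "?x 1 = Q"
    using conj_seq_0[OF P] conj_seq_1[OF Q] .
  ultimately show ?thesis
    unfolding is_chain_def using assms fwd bwd conj_seq_closed[OF P Q] by simp
qed

lemma is_chainD:
  assumes "is_chain G Ps m"
  shows "i \<le> m \<Longrightarrow> Ps i \<in> carrier G"
    and "Suc (Suc i) \<le> m \<Longrightarrow> Ps i \<noteq> Ps (Suc (Suc i))"
    and "i < m \<Longrightarrow> {Ps i \<otimes> Ps (Suc i), Ps (Suc i) \<otimes> Ps i} = {Ps 0 \<otimes> Ps 1, Ps 1 \<otimes> Ps 0}"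
proof -
  show "i \<le> m \<Longrightarrow> Ps i \<in> carrier G"
    using assms unfolding is_chain_def by blast
  show "Suc (Suc i) \<le> m \<Longrightarrow> Ps i \<noteq> Ps (Suc (Suc i))"
    using assms unfolding is_chain_def by (metis add_2_eq_Suc')
  show "i < m \<Longrightarrow> {Ps i \<otimes> Ps (Suc i), Ps (Suc i) \<otimes> Ps i} = {Ps 0 \<otimes> Ps 1, Ps 1 \<otimes> Ps 0}"
    using assms unfolding is_chain_def by (metis Suc_eq_plus1)
qed

lemma chain_not_commute:
  assumes chain: "is_chain G Ps m" and "2 \<le> m"
  shows "Ps 0 \<otimes> Ps 1 \<noteq> Ps 1 \<otimes> Ps 0"
proof
  assume "Ps 0 \<otimes> Ps 1 = Ps 1 \<otimes> Ps 0"
  with is_chainD(3)[OF chain, of 1] \<open>2 \<le> m\<close>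
  have "Ps 1 \<otimes> Ps 2 = Ps 1 \<otimes> Ps 0"
    by (simp add: numeral_2_eq_2 doubleton_eq_iff)
  then have "Ps 2 = Ps 0"
    using is_chainD(1)[OF chain] \<open>2 \<le> m\<close> by simp
  then show False
    using is_chainD(2)[OF chain, of 0] \<open>2 \<le> m\<close> by (simp add: numeral_2_eq_2)
qed

text \<open>An edge traversed in the opposite order to its predecessor would cancel to
  P_(i+2) = P_i, so the orientation of every edge is forced by the first one.\<close>

lemma chain_mult_Suc:
  assumes chain: "is_chain G Ps m" and "2 \<le> m" and "i < m"
  shows "Ps i \<otimes> Ps (Suc i) = Ps 0 \<otimes> Ps 1 \<and> Ps (Suc i) \<otimes> Ps i = Ps 1 \<otimes> Ps 0"
  using \<open>i < m\<close>
proof (induction i)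
  case 0
  then show ?case
    using is_chainD(3)[OF chain, of 0] by auto
next
  case (Suc i)
  then have prev: "Ps (Suc i) \<otimes> Ps i = Ps 1 \<otimes> Ps 0"
    by simp
  have "Ps (Suc i) \<otimes> Ps (Suc (Suc i)) \<noteq> Ps 1 \<otimes> Ps 0"
  proof
    assume "Ps (Suc i) \<otimes> Ps (Suc (Suc i)) = Ps 1 \<otimes> Ps 0"
    with prev have "Ps (Suc i) \<otimes> Ps (Suc (Suc i)) = Ps (Suc i) \<otimes> Ps i"
      by simp
    then have "Ps (Suc (Suc i)) = Ps i"
      using is_chainD(1)[OF chain, of i] is_chainD(1)[OF chain, of "Suc i"]
        is_chainD(1)[OF chain, of "Suc (Suc i)"] Suc.prems by simp
    then show False
      using is_chainD(2)[OF chain, of i] Suc.prems by simp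
  qed
  then show ?case
    using is_chainD(3)[OF chain, of "Suc i"] chain_not_commute[OF chain \<open>2 \<le> m\<close>] Suc.prems
    by (auto simp: doubleton_eq_iff)
qed

lemma chain_Suc:
  assumes chain: "is_chain G Ps m" and "2 \<le> m" and "i < m"
  shows "Ps (Suc i) = inv (Ps i) \<otimes> (Ps 0 \<otimes> Ps 1)"
proof -
  have "Ps i \<in> carrier G" "Ps (Suc i) \<in> carrier G" "Ps 0 \<otimes> Ps 1 \<in> carrier G"
    using is_chainD(1)[OF chain] \<open>2 \<le> m\<close> \<open>i < m\<close> by simp_all
  then show ?thesis
    using chain_mult_Suc[OF assms] by (simp add: inv_solve_left)
qed

lemma chain_eq_conj_seq:
  assumes chain: "is_chain G Ps m" and "2 \<le> m" and "i \<le> m"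
  shows "Ps i = conj_seq G (Ps 0) (Ps 1) i"
  using \<open>i \<le> m\<close>
proof (induction i)
  case 0
  then show ?case
    using is_chainD(1)[OF chain] by (simp add: conj_seq_0)
next
  case (Suc i)
  then have "i < m"
    by simp
  have carrier: "Ps 0 \<in> carrier G" "Ps 1 \<in> carrier G"
    using is_chainD(1)[OF chain] \<open>2 \<le> m\<close> by simp_all
  have "Ps (Suc i) = inv (Ps i) \<otimes> (Ps 0 \<otimes> Ps 1)"
    by (rule chain_Suc[OF chain \<open>2 \<le> m\<close> \<open>i < m\<close>])
  also have "Ps i = conj_seq G (Ps 0) (Ps 1) i"
    using Suc.IH \<open>i < m\<close> by simp
  also have "inv (conj_seq G (Ps 0) (Ps 1) i) \<otimes> (Ps 0 \<otimes> Ps 1) = conj_seq G (Ps 0) (Ps 1) (Suc i)"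
    by (rule conj_seq_Suc[OF carrier, symmetric])
  finally show ?case .
qed

lemma chain_square_commute:
  assumes chain: "is_chain G Ps m" and "3 \<le> m"
  shows "Ps 0 \<otimes> Ps 1 [^] (2::nat) = Ps 1 [^] (2::nat) \<otimes> Ps 0"
    and "Ps 0 [^] (2::nat) \<otimes> Ps 1 = Ps 1 \<otimes> Ps 0 [^] (2::nat)"
proof -
  let ?P = "Ps 0" and ?Q = "Ps 1"
  have m: "2 \<le> m"
    using \<open>3 \<le> m\<close> by simp
  have P: "?P \<in> carrier G" and Q: "?Q \<in> carrier G" and R: "Ps 2 \<in> carrier G"
    using is_chainD(1)[OF chain] m by simp_all
  have R_eq: "Ps 2 = inv ?Q \<otimes> (?P \<otimes> ?Q)"
    using chain_Suc[OF chain m, of 1] m by (simp add: numeral_2_eq_2)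
  have "Ps 2 \<otimes> ?Q = ?Q \<otimes> ?P"
    using chain_mult_Suc[OF chain m, of 1] m by (simp add: numeral_2_eq_2)
  then have "inv ?Q \<otimes> (?P \<otimes> (?Q \<otimes> ?Q)) = ?Q \<otimes> ?P"
    using P Q by (simp add: R_eq m_assoc)
  then have PQQ: "?P \<otimes> (?Q \<otimes> ?Q) = ?Q \<otimes> (?Q \<otimes> ?P)"
    using P Q by (simp add: inv_solve_left' m_assoc)
  then show "?P \<otimes> ?Q [^] (2::nat) = ?Q [^] (2::nat) \<otimes> ?P"
    using P Q by (simp add: nat_pow_2 m_assoc)
  have "Ps 3 \<otimes> Ps 2 = ?Q \<otimes> ?P" and "Ps 3 = inv (Ps 2) \<otimes> (?P \<otimes> ?Q)"
    using chain_mult_Suc[OF chain m, of 2] chain_Suc[OF chain m, of 2] \<open>3 \<le> m\<close>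
    by (simp_all add: numeral_3_eq_3 numeral_2_eq_2)
  then have "(?P \<otimes> ?Q) \<otimes> Ps 2 = Ps 2 \<otimes> (?Q \<otimes> ?P)"
    using P Q R by (simp add: m_assoc inv_solve_left')
  then have "?P \<otimes> (?P \<otimes> ?Q) = inv ?Q \<otimes> (?P \<otimes> (?Q \<otimes> (?Q \<otimes> ?P)))"
    using P Q by (simp add: R_eq m_assoc)
  also have "\<dots> = ?Q \<otimes> (?P \<otimes> ?P)"
    using PQQ P Q by (simp add: m_assoc[symmetric])
  finally show "?P [^] (2::nat) \<otimes> ?Q = ?Q \<otimes> ?P [^] (2::nat)"
    using P Q by (simp add: nat_pow_2 m_assoc)
qed

end

theorem theorem6p2:
  fixes G (structure) and P Q :: 'a
  assumes "group G" and "P \<in> carrier G" and "Q \<in> carrier G"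
  shows "(\<forall>(Ps :: nat \<Rightarrow> 'a) m. 3 \<le> m \<and> is_chain G Ps m \<and> Ps 0 = P \<and> Ps 1 = Q \<longrightarrow>
            P \<otimes> Q \<noteq> Q \<otimes> P \<and>
            P \<otimes> (Q [^] (2::nat)) = (Q [^] (2::nat)) \<otimes> P \<and>
            (P [^] (2::nat)) \<otimes> Q = Q \<otimes> (P [^] (2::nat)) \<and>
            (\<forall>i\<le>m. (even i \<longrightarrow>
                        Ps i = inv ((P \<otimes> Q) [^] (i div 2)) \<otimes> P \<otimes> ((P \<otimes> Q) [^] (i div 2)) \<and>
                        Ps i [^] (2::nat) = P [^] (2::nat)) \<and>
                      (odd i \<longrightarrow>
                        Ps i = inv ((P \<otimes> Q) [^] ((i - 1) div 2)) \<otimes> Q \<otimes> ((P \<otimes> Q) [^] ((i - 1) div 2)) \<and>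
                        Ps i [^] (2::nat) = Q [^] (2::nat))))
       \<and>
         (P \<otimes> Q \<noteq> Q \<otimes> P \<and>
          P \<otimes> (Q [^] (2::nat)) = (Q [^] (2::nat)) \<otimes> P \<and>
          (P [^] (2::nat)) \<otimes> Q = Q \<otimes> (P [^] (2::nat)) \<longrightarrow>
          (\<forall>m::nat. 3 \<le> m \<longrightarrow>
             is_chain G (conj_seq G P Q) m \<and>
             conj_seq G P Q 0 = P \<and> conj_seq G P Q 1 = Q \<and>
             (\<forall>i\<le>m. (even i \<longrightarrow> conj_seq G P Q i [^] (2::nat) = P [^] (2::nat)) \<and>
                      (odd i \<longrightarrow> conj_seq G P Q i [^] (2::nat) = Q [^] (2::nat)))))"
proof -
  interpret group G by fact
  note P = \<open>P \<in> carrier G\<close> and Q = \<open>Q \<in> carrier G\<close>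
  show ?thesis
  proof (intro conjI allI impI; elim conjE)
    fix Ps m i
    assume "3 \<le> m" and chain: "is_chain G Ps m" and Ps0: "Ps 0 = P" and Ps1: "Ps 1 = Q"
    then have m: "2 \<le> m"
      by simp
    show PQQ: "P \<otimes> Q [^] (2::nat) = Q [^] (2::nat) \<otimes> P"
      and PPQ: "P [^] (2::nat) \<otimes> Q = Q \<otimes> P [^] (2::nat)"
      using chain_square_commute[OF chain \<open>3 \<le> m\<close>] Ps0 Ps1 by simp_all
    show "P \<otimes> Q \<noteq> Q \<otimes> P"
      using chain_not_commute[OF chain m] Ps0 Ps1 by simp
    assume "i \<le> m"
    then have Ps_i: "Ps i = conj_seq G P Q i"
      using chain_eq_conj_seq[OF chain m] unfolding Ps0 Ps1 by blast
    then show "even i \<Longrightarrow> Ps i = inv ((P \<otimes> Q) [^] (i div 2)) \<otimes> P \<otimes> (P \<otimes> Q) [^] (i div 2)"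
      and "odd i \<Longrightarrow> Ps i = inv ((P \<otimes> Q) [^] ((i - 1) div 2)) \<otimes> Q \<otimes> (P \<otimes> Q) [^] ((i - 1) div 2)"
      by (simp_all add: conj_seq_even conj_seq_odd)
    show "even i \<Longrightarrow> Ps i [^] (2::nat) = P [^] (2::nat)"
      and "odd i \<Longrightarrow> Ps i [^] (2::nat) = Q [^] (2::nat)"
      using Ps_i conj_seq_square_even[OF P Q PPQ] conj_seq_square_odd[OF P Q PQQ] by simp_all
  next
    fix m i :: nat
    assume "P \<otimes> Q \<noteq> Q \<otimes> P" "3 \<le> m"
      and PQQ: "P \<otimes> Q [^] (2::nat) = Q [^] (2::nat) \<otimes> P"
      and PPQ: "P [^] (2::nat) \<otimes> Q = Q \<otimes> P [^] (2::nat)"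
    then show "is_chain G (conj_seq G P Q) m"
      using is_chain_conj_seq[OF P Q] by simp
    show "conj_seq G P Q 0 = P" "conj_seq G P Q 1 = Q"
      using conj_seq_0[OF P] conj_seq_1[OF Q] .
    show "even i \<Longrightarrow> conj_seq G P Q i [^] (2::nat) = P [^] (2::nat)"
      by (rule conj_seq_square_even[OF P Q PPQ])
    show "odd i \<Longrightarrow> conj_seq G P Q i [^] (2::nat) = Q [^] (2::nat)"
      by (rule conj_seq_square_odd[OF P Q PQQ])
  qed
qed

end
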